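(* Let $x,y,z$ be fixed roots of unity different from $1$. Let $\mathcal{E}^*\in\overline{\mathbb{Q}}[a,b,c,d]$ be the polynomial obtained from \[\mathcal{E}=B_2^2-A_1B_1B_2+(A_1^2-2A_2)B_2+A_2B_1^2-A_1A_2B_1+A_2^2\] by substituting \[A_1=\tfrac{y-x}{y-1}a+\tfrac{xy-1}{y-1}b,\quad A_2=xab,\quad B_1=\tfrac{z-x}{z-1}c+\tfrac{xz-1}{z-1}d,\quad B_2=xcd.\] Then $\mathcal{E}^*$ is irreducible in $\overline{\mathbb{Q}}[a,b,c,d]$, unless $x=y=z=-1$.
   Context: $a,b,c,d$ are independent variables. (For $x=y=z=-1$ one has $\mathcal{E}^*=(ab-cd)^2$.) *)

theory Defs
  imports Complex_Main "HOL-Computational_Algebra.Polynomial"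
begin

text \<open>Polynomials in four variables a, b, c, d over the complex numbers, represented as
  nested univariate polynomials: innermost variable a, then b, then c, outermost d.
  The ring Qbar[a,b,c,d] is the subring of those with all coefficients algebraic.\<close>

type_synonym mpoly4 = "complex poly poly poly poly"

definition const4 :: "complex \<Rightarrow> mpoly4" where
  "const4 r = [:[:[:[:r:]:]:]:]"

definition var_a :: mpoly4 where
  "var_a = [:[:[:[:0, 1:]:]:]:]"

definition var_b :: mpoly4 where
  "var_b = [:[:[:0, 1:]:]:]"

definition var_c :: mpoly4 where
  "var_c = [:[:0, 1:]:]"

definition var_d :: mpoly4 where
  "var_d = [:0, 1:]"

definition alg_coeffs4 :: "mpoly4 \<Rightarrow> bool" where
  "alg_coeffs4 p \<longleftrightarrow>
     (\<forall>i j k l. algebraic (coeff (coeff (coeff (coeff p i) j) k) l))"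

definition unit_Qbar4 :: "mpoly4 \<Rightarrow> bool" where
  "unit_Qbar4 f \<longleftrightarrow> (\<exists>h. alg_coeffs4 h \<and> f * h = 1)"

definition irreducible_Qbar4 :: "mpoly4 \<Rightarrow> bool" where
  "irreducible_Qbar4 p \<longleftrightarrow>
     alg_coeffs4 p \<and> p \<noteq> 0 \<and> \<not> unit_Qbar4 p \<and>
     (\<forall>f g. alg_coeffs4 f \<and> alg_coeffs4 g \<and> p = f * g \<longrightarrow> unit_Qbar4 f \<or> unit_Qbar4 g)"

definition root_of_unity :: "complex \<Rightarrow> bool" where
  "root_of_unity x \<longleftrightarrow> (\<exists>n::nat. n > 0 \<and> x ^ n = 1)"

definition E_poly :: "mpoly4 \<Rightarrow> mpoly4 \<Rightarrow> mpoly4 \<Rightarrow> mpoly4 \<Rightarrow> mpoly4" where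
  "E_poly A1 A2 B1 B2 =
     B2^2 - A1 * B1 * B2 + (A1^2 - 2 * A2) * B2 + A2 * B1^2 - A1 * A2 * B1 + A2^2"

definition E_star :: "complex \<Rightarrow> complex \<Rightarrow> complex \<Rightarrow> mpoly4" where
  "E_star x y z =
     E_poly
       (const4 ((y - x) / (y - 1)) * var_a + const4 ((x * y - 1) / (y - 1)) * var_b)
       (const4 x * var_a * var_b)
       (const4 ((z - x) / (z - 1)) * var_c + const4 ((x * z - 1) / (z - 1)) * var_d)
       (const4 x * var_c * var_d)"

end

theory Submission
  imports
    Defs
    "HOL-Computational_Algebra.Polynomial_Factorial"
    "HOL-Computational_Algebra.Field_as_Ring"
begin

(* Write p = (y - x)/(y - 1), q = (x y - 1)/(y - 1) and r, s likewise with z, so that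
   A1 = p a + q b, A2 = x a b, B1 = r c + s d and B2 = x c d.  Over R = C[a,b], E* is a quadratic
   L d^2 + M d + N with coefficients in R[c], and M^2 - 4 L N = (A1^2 - 4 A2) S^2 with
   S = -s A2 + x A1 c - r x c^2.  Since p q - x = -y (x - 1)^2 / (y - 1)^2 is nonzero, the binary
   form A1^2 - 4 A2 is not a square; and S = 0 forces p = q = r = 0, hence x = y = z = -1.  So E*
   is not a product of two factors linear in d.  A factor free of d divides L, M and N, and L has
   the unit leading coefficient x^2 in c.  If the factor had degree 1 in c, its root would be a
   root of N in R, making A1^2 - 4 A2 a square again; if it had degree 2, L and M would be
   proportional, forcing (x - r s) (A1^2 - 2 A2) = 0.  Hence E* is irreducible over C.  Its
   coefficients lie in the Q-span of the n-th roots of unity for a suitable n, a finite-dimensional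
   Q-algebra, so they are algebraic; as the units of C[a,b,c,d] are the nonzero constants,
   irreducibility over the algebraic numbers follows. *)

section \<open>Algebraic coefficients\<close>

interpretation rat_vs: vector_space "\<lambda>(r::rat) (w::'a::field_char_0). of_rat r * w"
  by unfold_locales (simp_all add: algebra_simps of_rat_add of_rat_mult)

lemma rat_vs_subspace_mult_preimage: "rat_vs.subspace {v. c * v \<in> rat_vs.span S}"
  unfolding rat_vs.subspace_def
  by (auto simp: distrib_left rat_vs.span_add rat_vs.span_zero mult.left_commute[of c]
      intro: rat_vs.span_scale)

lemma rat_vs_span_mult_closed:
  assumes mult: "\<And>g h. g \<in> G \<Longrightarrow> h \<in> G \<Longrightarrow> g * h \<in> G"
    and u: "u \<in> rat_vs.span G" and v: "v \<in> rat_vs.span G"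
  shows "u * v \<in> rat_vs.span G"
proof -
  have "rat_vs.span G \<subseteq> {v. g * v \<in> rat_vs.span G}" if "g \<in> G" for g
    using that mult by (intro rat_vs.span_minimal rat_vs_subspace_mult_preimage)
      (auto intro: rat_vs.span_base)
  then have "rat_vs.span G \<subseteq> {u. v * u \<in> rat_vs.span G}"
    using v by (intro rat_vs.span_minimal rat_vs_subspace_mult_preimage) (auto simp: mult.commute)
  with u show ?thesis
    by (auto simp: mult.commute)
qed

lemma algebraic_if_in_span_finite_monoid:
  fixes w :: "'a::field_char_0"
  assumes fin: "finite G" and one: "1 \<in> G"
    and mult: "\<And>g h. g \<in> G \<Longrightarrow> h \<in> G \<Longrightarrow> g * h \<in> G"
    and w: "w \<in> rat_vs.span G"
  shows "algebraic w"
proof (cases "inj_on (\<lambda>k. w ^ k) {..card G}")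
  case False
  then obtain i j where "i \<noteq> j" "w ^ i = w ^ j"
    unfolding inj_on_def by blast
  then show ?thesis
    by (intro algebraicI[of "monom 1 i - monom 1 j"])
      (auto simp: poly_monom coeff_monom dest: arg_cong[where f = "\<lambda>p. coeff p i"])
next
  case True
  define W where "W = (\<lambda>k. w ^ k) ` {..card G}"
  have "w ^ k \<in> rat_vs.span G" for k
    by (induction k) (auto intro: rat_vs.span_base one rat_vs_span_mult_closed[OF mult w])
  then have "W \<subseteq> rat_vs.span G"
    unfolding W_def by blast
  moreover have "card W = Suc (card G)"
    unfolding W_def using card_image[OF True] by simp
  ultimately have "rat_vs.dependent W"
    using rat_vs.independent_span_bound[OF fin] by fastforce
  then obtain u where u: "\<exists>v\<in>W. u v \<noteq> 0" "(\<Sum>v\<in>W. of_rat (u v) * v) = 0"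
    unfolding W_def by (auto simp: rat_vs.dependent_finite)
  define P where "P = (\<Sum>k\<le>card G. monom (of_rat (u (w ^ k))) k :: 'a poly)"
  have coeff_P: "coeff P k = (if k \<le> card G then of_rat (u (w ^ k)) else 0)" for k
    unfolding P_def by (simp add: coeff_sum coeff_monom)
  have "poly P w = (\<Sum>v\<in>W. of_rat (u v) * v)"
    unfolding P_def W_def using True by (simp add: poly_sum poly_monom sum.reindex)
  obtain k where "k \<le> card G" "u (w ^ k) \<noteq> 0"
    using u(1) unfolding W_def by blast
  then have "coeff P k \<noteq> 0"
    by (simp add: coeff_P)
  then have "P \<noteq> 0"
    by auto
  moreover have "coeff P i \<in> \<rat>" for i
    by (simp add: coeff_P)
  ultimately show ?thesis
    using u(2) \<open>poly P w = _\<close> by (intro algebraicI'[of P]) simp_all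
qed

lemma algebraic_if_in_span_roots_of_unity:
  assumes "N > 0" and "w \<in> rat_vs.span {u::complex. u ^ N = 1}"
  shows "algebraic w"
  using assms
  by (intro algebraic_if_in_span_finite_monoid[of "{u. u ^ N = 1}"] finite_roots_unity)
    (auto simp: power_mult_distrib)

lemma diff_one_mult_weighted_power_sum:
  fixes y :: "'a::comm_ring_1"
  shows "(y - 1) * (\<Sum>k<n. of_nat k * y ^ k) = of_nat n * y ^ n - y * (\<Sum>k<n. y ^ k)"
  by (induction n) (simp_all add: algebra_simps)

lemma inverse_diff_one_in_span_roots_of_unity:
  fixes y :: complex
  assumes "y ^ N = 1" "N > 0" "y \<noteq> 1"
  shows "inverse (y - 1) \<in> rat_vs.span {u. u ^ N = 1}"
proof -
  have "(\<Sum>k<N. y ^ k) = 0"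
    using assms by (simp add: sum_gp_strict)
  then have "(y - 1) * (\<Sum>k<N. of_nat k * y ^ k) = of_nat N"
    using assms(1) by (simp add: diff_one_mult_weighted_power_sum)
  then have "inverse (y - 1) = (\<Sum>k<N. of_nat k * y ^ k) / of_nat N"
    using assms(2,3) by (simp add: field_simps)
  also have "\<dots> = (\<Sum>k<N. of_rat (of_nat k / of_nat N) * y ^ k)"
    by (simp add: sum_divide_distrib of_rat_divide)
  also have "\<dots> \<in> rat_vs.span {u. u ^ N = 1}"
  proof (intro rat_vs.span_sum rat_vs.span_scale rat_vs.span_base CollectI)
    fix k
    have "(y ^ k) ^ N = (y ^ N) ^ k"
      by (simp only: power_mult[symmetric] mult.commute)
    with assms(1) show "(y ^ k) ^ N = 1"
      by simp
  qed
  finally show ?thesis .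
qed

definition ring_closed :: "'a::comm_ring_1 set \<Rightarrow> bool" where
  "ring_closed R \<longleftrightarrow> 1 \<in> R \<and> (\<forall>a\<in>R. \<forall>b\<in>R. a - b \<in> R \<and> a * b \<in> R)"

context
  fixes R :: "'a::comm_ring_1 set"
  assumes R: "ring_closed R"
begin

lemma ring_closed_one: "1 \<in> R"
  and ring_closed_diff: "a \<in> R \<Longrightarrow> b \<in> R \<Longrightarrow> a - b \<in> R"
  and ring_closed_mult: "a \<in> R \<Longrightarrow> b \<in> R \<Longrightarrow> a * b \<in> R"
  using R by (simp_all add: ring_closed_def)

lemma ring_closed_zero: "0 \<in> R"
  using ring_closed_diff[OF ring_closed_one ring_closed_one] by simp

lemma ring_closed_add: "a \<in> R \<Longrightarrow> b \<in> R \<Longrightarrow> a + b \<in> R"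
  using ring_closed_diff[OF _ ring_closed_diff[OF ring_closed_zero]] by fastforce

lemma ring_closed_power: "a \<in> R \<Longrightarrow> a ^ n \<in> R"
  by (induction n) (simp_all add: ring_closed_one ring_closed_mult)

lemma ring_closed_numeral: "numeral n \<in> R"
  by (induction n) (simp_all only: numeral.simps ring_closed_one ring_closed_add)

end

lemmas ring_closed_intros =
  ring_closed_one ring_closed_zero ring_closed_diff ring_closed_add ring_closed_mult
  ring_closed_power ring_closed_numeral

lemma ring_closed_span_roots_of_unity: "ring_closed (rat_vs.span {u::complex. u ^ N = 1})"
  unfolding ring_closed_def
  by (auto intro: rat_vs.span_base rat_vs.span_diff rat_vs_span_mult_closed
      simp: power_mult_distrib)

definition poly_over :: "'a::zero set \<Rightarrow> 'a poly set" where
  "poly_over R = {p. \<forall>i. coeff p i \<in> R}"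

lemma coeff_poly_over: "p \<in> poly_over R \<Longrightarrow> coeff p i \<in> R"
  by (simp add: poly_over_def)

lemma ring_closed_poly_over:
  assumes R: "ring_closed R"
  shows "ring_closed (poly_over R)"
  unfolding ring_closed_def poly_over_def
  using ring_closed_intros[OF R]
  by (auto intro: coeff_mult_semiring_closed[of R])

lemma const_poly_over: "ring_closed R \<Longrightarrow> r \<in> R \<Longrightarrow> [:r:] \<in> poly_over R"
  by (auto simp: poly_over_def coeff_pCons ring_closed_zero split: nat.split)

lemma X_poly_over: "ring_closed R \<Longrightarrow> [:0, 1:] \<in> poly_over R"
  by (auto simp: poly_over_def coeff_pCons ring_closed_zero ring_closed_one split: nat.split)

lemma E_star_poly_over:
  assumes V: "ring_closed V" and "x \<in> V"
    and "(y - x) / (y - 1) \<in> V" "(x * y - 1) / (y - 1) \<in> V"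
    and "(z - x) / (z - 1) \<in> V" "(x * z - 1) / (z - 1) \<in> V"
  shows "E_star x y z \<in> poly_over (poly_over (poly_over (poly_over V)))"
proof -
  define V4 where "V4 = poly_over (poly_over (poly_over (poly_over V)))"
  have V4: "ring_closed V4"
    unfolding V4_def by (intro ring_closed_poly_over V)
  have const: "const4 v \<in> V4" if "v \<in> V" for v
    unfolding const4_def V4_def using that by (intro const_poly_over ring_closed_poly_over V)
  have vars: "var_a \<in> V4" "var_b \<in> V4" "var_c \<in> V4" "var_d \<in> V4"
    unfolding var_a_def var_b_def var_c_def var_d_def V4_def
    by (intro const_poly_over X_poly_over ring_closed_poly_over V ring_closed_zero)+
  have "E_star x y z \<in> V4"
    unfolding E_star_def E_poly_def by (intro ring_closed_intros[OF V4] const vars assms(2-))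
  then show ?thesis
    unfolding V4_def .
qed

lemma alg_coeffs4_E_star:
  assumes "root_of_unity x" "root_of_unity y" "root_of_unity z" "y \<noteq> 1" "z \<noteq> 1"
  shows "alg_coeffs4 (E_star x y z)"
proof -
  obtain nx ny nz where n: "nx > 0" "x ^ nx = 1" "ny > 0" "y ^ ny = 1" "nz > 0" "z ^ nz = 1"
    using assms(1-3) unfolding root_of_unity_def by blast
  define N where "N = nx * ny * nz"
  have pow_N: "u ^ N = 1" if "u ^ k = 1" "k dvd N" for u :: complex and k
    using that by (auto elim!: dvdE simp: power_mult)
  have N: "N > 0" "x ^ N = 1" "y ^ N = 1" "z ^ N = 1"
    using n unfolding N_def by (auto intro!: pow_N[unfolded N_def])
  define V where "V = rat_vs.span {u::complex. u ^ N = 1}"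
  have V: "ring_closed V"
    unfolding V_def by (rule ring_closed_span_roots_of_unity)
  have xyz: "x \<in> V" "y \<in> V" "z \<in> V"
    using N unfolding V_def by (auto intro: rat_vs.span_base)
  have inv: "inverse (y - 1) \<in> V" "inverse (z - 1) \<in> V"
    using N assms(4,5) unfolding V_def by (auto intro: inverse_diff_one_in_span_roots_of_unity)
  have "(y - x) / (y - 1) \<in> V" "(x * y - 1) / (y - 1) \<in> V"
    "(z - x) / (z - 1) \<in> V" "(x * z - 1) / (z - 1) \<in> V"
    unfolding divide_inverse by (intro ring_closed_intros[OF V] xyz inv)+
  then have E: "E_star x y z \<in> poly_over (poly_over (poly_over (poly_over V)))"
    using V xyz(1) by (intro E_star_poly_over)
  have alg: "algebraic v" if "v \<in> V" for v
    using N(1) that unfolding V_def by (rule algebraic_if_in_span_roots_of_unity)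
  show ?thesis
    unfolding alg_coeffs4_def
  proof (intro allI alg)
    fix i j k l
    show "coeff (coeff (coeff (coeff (E_star x y z) i) j) k) l \<in> V"
      using E by (intro coeff_poly_over)
  qed
qed

section \<open>Irreducibility of the quadratic in d\<close>

lemma discriminant_of_linear_product:
  fixes f0 f1 g0 g1 :: "'a::comm_ring_1"
  assumes "[:c0, c1, c2:] = [:f0, f1:] * [:g0, g1:]"
  shows "c1^2 - 4 * c2 * c0 = (f0 * g1 - f1 * g0)^2"
proof -
  have "[:c0, c1, c2:] = [:f0 * g0, f0 * g1 + f1 * g0, f1 * g1:]"
    using assms by (simp add: algebra_simps)
  then show ?thesis
    by (simp add: power2_eq_square algebra_simps)
qed

lemma square_if_mult_square_eq_square:
  fixes d s t :: "'a::{semiring_gcd, idom}"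
  assumes "t^2 = d * s^2" "s \<noteq> 0"
  shows "\<exists>h. h^2 = d"
proof -
  have "s^2 dvd t^2"
    using assms(1) by simp
  then obtain h where "t = s * h"
    by (auto elim: dvdE)
  with assms have "h^2 = d"
    by (simp add: power_mult_distrib mult.commute)
  then show ?thesis ..
qed

lemma degree_pCons3_le: "degree [:a, b, c:] \<le> 2"
  using degree_pCons_le[of a "[:b, c:]"] degree_pCons_le[of b "[:c:]"] by simp

lemma square_of_binary_quadratic_form:
  fixes k :: "'a::idom poly"
  assumes "k^2 = [:c0, c1, c2:]"
  shows "c1^2 = 4 * c0 * c2"
proof -
  have "degree k \<le> 1"
  proof (rule ccontr)
    assume "\<not> degree k \<le> 1"
    then have "k \<noteq> 0"
      by auto
    then have "degree (k^2) = 2 * degree k"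
      by (simp add: power2_eq_square degree_mult_eq)
    with assms \<open>\<not> degree k \<le> 1\<close> degree_pCons3_le[of c0 c1 c2] show False
      by simp
  qed
  then have "k = [:coeff k 0, coeff k 1:]"
    by (intro poly_eqI) (auto simp: coeff_pCons coeff_eq_0 split: nat.split)
  then obtain k0 k1 where "k = [:k0, k1:]"
    by blast
  with assms have "[:k0^2, 2 * k0 * k1, k1^2:] = [:c0, c1, c2:]"
    by (simp add: power2_eq_square algebra_simps)
  then show ?thesis
    by (auto simp: power2_eq_square algebra_simps)
qed

lemma is_unit_lead_coeff_if_dvd:
  fixes p q :: "'a::idom poly"
  assumes "p dvd q" "lead_coeff q dvd 1"
  shows "lead_coeff p dvd 1"
proof -
  obtain g where "q = p * g"
    using assms(1) by (rule dvdE)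
  then have "lead_coeff p dvd lead_coeff q"
    by (simp add: lead_coeff_mult)
  then show ?thesis
    using assms(2) by (rule dvd_trans)
qed

lemma degree_one_has_root:
  fixes p :: "'a::comm_ring_1 poly"
  assumes "degree p = 1" "lead_coeff p dvd 1"
  shows "\<exists>x. poly p x = 0"
proof -
  obtain a b where p: "p = [:b, a:]" and "a \<noteq> 0"
    using degree1_coeffs[OF assms(1)] by blast
  have "a dvd 1"
    using assms(2) p by (simp add: \<open>a \<noteq> 0\<close>)
  then obtain u where "1 = a * u"
    by (rule dvdE)
  have "poly p (- (b * u)) = b * (1 - a * u)"
    using p by (simp add: algebra_simps)
  also have "\<dots> = 0"
    using \<open>1 = a * u\<close> by simp
  finally show ?thesis ..
qed

lemma smult_if_dvd_degree_le:
  fixes p q :: "'a::idom poly"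
  assumes "p dvd q" "degree q \<le> degree p"
  shows "\<exists>c. q = smult c p"
proof -
  obtain g where g: "q = p * g"
    using assms(1) by (auto elim: dvdE)
  show ?thesis
  proof (cases "p = 0 \<or> g = 0")
    case True
    then show ?thesis
      using g by (metis mult_zero_left mult_zero_right smult_0_left)
  next
    case False
    then have "degree g = 0"
      using assms(2) g by (simp add: degree_mult_eq)
    then obtain c where "g = [:c:]"
      using degree0_coeffs by blast
    then show ?thesis
      using g by auto
  qed
qed

lemma const_poly_ring_hom:
  fixes a b :: "'a::comm_ring_1"
  shows "[:a + b:] = [:a:] + [:b:]" "[:a - b:] = [:a:] - [:b:]" "[:- a:] = - [:a:]"
    "[:a * b:] = [:a:] * [:b:]" "[:a ^ n:] = [:a:] ^ n" "[:numeral m:] = numeral m"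
proof -
  show mult: "[:a * b:] = [:a:] * [:b:]" for a b :: 'a
    by (simp add: mult.commute)
  show "[:a ^ n:] = [:a:] ^ n"
    by (induction n) (simp_all add: mult one_pCons)
qed (simp_all add: numeral_poly)

lemma pCons3_eq_sum: "[:u0, u1, u2:] = [:u0:] + [:u1:] * [:0, 1:] + [:u2:] * [:0, 1:]^2"
  for u0 u1 u2 :: "'a::comm_semiring_1"
  by (simp add: power2_eq_square)

definition E_form :: "'a::comm_ring_1 \<Rightarrow> 'a \<Rightarrow> 'a \<Rightarrow> 'a \<Rightarrow> 'a" where
  "E_form A1 A2 B1 B2 =
     B2^2 - A1 * B1 * B2 + (A1^2 - 2 * A2) * B2 + A2 * B1^2 - A1 * A2 * B1 + A2^2"

lemma E_poly_eq_E_form: "E_poly = E_form"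
  by (simp add: fun_eq_iff E_poly_def E_form_def)

lemma E_form_as_quadratic:
  fixes A1 A2 x r s c d :: "'a::comm_ring_1"
  shows "E_form A1 A2 (r * c + s * d) (x * c * d) =
      (A2^2 + (- (r * A1 * A2)) * c + (r^2 * A2) * c^2)
    + (- (s * A1 * A2) + (x * (A1^2 - 2 * A2) + 2 * r * s * A2) * c + (- (r * x * A1)) * c^2) * d
    + (s^2 * A2 + (- (x * s * A1)) * c + x^2 * c^2) * d^2"
  by (simp add: E_form_def power2_eq_square algebra_simps)

lemma E_form_coeffs_discriminant:
  fixes A1 A2 x r s c :: "'a::comm_ring_1"
  shows "(- (s * A1 * A2) + (x * (A1^2 - 2 * A2) + 2 * r * s * A2) * c + (- (r * x * A1)) * c^2)^2
      - 4 * (s^2 * A2 + (- (x * s * A1)) * c + x^2 * c^2)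
          * (A2^2 + (- (r * A1 * A2)) * c + (r^2 * A2) * c^2)
    = (A1^2 - 4 * A2) * (- (s * A2) + (x * A1) * c + (- (r * x)) * c^2)^2"
  by (simp add: power2_eq_square algebra_simps)

text \<open>E over R[c][d] (d outer) with B1 = r c + s d and B2 = x c d.\<close>

definition E_quad :: "'a::comm_ring_1 \<Rightarrow> 'a \<Rightarrow> 'a \<Rightarrow> 'a \<Rightarrow> 'a \<Rightarrow> 'a poly poly" where
  "E_quad A1 A2 x r s = E_form [:[:A1:]:] [:[:A2:]:] [:[:0, r:], [:s:]:] [:0, [:0, x:]:]"

lemma E_quad_coeffs:
  "E_quad A1 A2 x r s =
     [:[:A2^2, - (r * A1 * A2), r^2 * A2:],
       [:- (s * A1 * A2), x * (A1^2 - 2 * A2) + 2 * r * s * A2, - (r * x * A1):],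
       [:s^2 * A2, - (x * s * A1), x^2:]:]"
proof -
  have B: "[:[:0, r:], [:s:]:] = [:[:r:]:] * [:[:0, 1:]:] + [:[:s:]:] * [:0, 1:]"
    "[:0, [:0, x:]:] = [:[:x:]:] * [:[:0, 1:]:] * [:0, 1:]"
    by simp_all
  show ?thesis
    unfolding E_quad_def B pCons3_eq_sum
    by (simp only: const_poly_ring_hom E_form_as_quadratic)
qed

lemma E_quad_discriminant:
  "coeff (E_quad A1 A2 x r s) 1 ^ 2
     - 4 * coeff (E_quad A1 A2 x r s) 2 * coeff (E_quad A1 A2 x r s) 0
   = [:A1^2 - 4 * A2:] * [:- (s * A2), x * A1, - (r * x):] ^ 2"
proof -
  have "coeff (E_quad A1 A2 x r s) 0 = [:A2^2, - (r * A1 * A2), r^2 * A2:]"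
    "coeff (E_quad A1 A2 x r s) 1 =
       [:- (s * A1 * A2), x * (A1^2 - 2 * A2) + 2 * r * s * A2, - (r * x * A1):]"
    "coeff (E_quad A1 A2 x r s) 2 = [:s^2 * A2, - (x * s * A1), x^2:]"
    by (simp_all add: E_quad_coeffs numeral_2_eq_2)
  then show ?thesis
    unfolding pCons3_eq_sum by (simp only: const_poly_ring_hom E_form_coeffs_discriminant)
qed

lemma E_quad_coeff0_no_root:
  fixes A1 A2 r :: "'a::idom"
  assumes "A2 \<noteq> 0" and nonsquare: "\<And>h. h^2 \<noteq> A1^2 - 4 * A2"
  shows "poly [:A2^2, - (r * A1 * A2), r^2 * A2:] \<psi> \<noteq> 0"
proof
  assume "poly [:A2^2, - (r * A1 * A2), r^2 * A2:] \<psi> = 0"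
  then have "A2 * ((r * \<psi>)^2 - A1 * (r * \<psi>) + A2) = 0"
    by (simp add: power2_eq_square algebra_simps)
  with assms(1) have "(r * \<psi>)^2 - A1 * (r * \<psi>) + A2 = 0"
    by simp
  moreover have "(A1 - 2 * (r * \<psi>))^2 = A1^2 - 4 * A2 + 4 * ((r * \<psi>)^2 - A1 * (r * \<psi>) + A2)"
    by (simp add: power2_eq_square algebra_simps)
  ultimately show False
    using nonsquare by simp
qed

lemma E_quad_coeffs_not_proportional:
  fixes A1 A2 x r s :: "'a::idom"
  assumes "x \<noteq> 0" "r * s \<noteq> x" "A1^2 \<noteq> 2 * A2"
  shows "x^2 * (x * (A1^2 - 2 * A2) + 2 * r * s * A2) \<noteq> (- (x * s * A1)) * (- (r * x * A1))"
proof
  assume "x^2 * (x * (A1^2 - 2 * A2) + 2 * r * s * A2) = (- (x * s * A1)) * (- (r * x * A1))"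
  then have "x^2 * ((x - r * s) * (A1^2 - 2 * A2)) = 0"
    by (simp add: power2_eq_square algebra_simps)
  with assms show False
    by simp
qed

lemma E_quad_content_is_unit:
  fixes A1 A2 x r s :: "'a::idom"
  assumes x: "x dvd 1" and A2: "A2 \<noteq> 0"
    and nonsquare: "\<And>h. h^2 \<noteq> A1^2 - 4 * A2"
    and A1: "A1^2 \<noteq> 2 * A2" and rs: "r * s \<noteq> x"
    and E: "E_quad A1 A2 x r s = [:\<phi>:] * g"
  shows "\<phi> dvd 1"
proof -
  define N M L where
    "N = [:A2^2, - (r * A1 * A2), r^2 * A2:]" and
    "M = [:- (s * A1 * A2), x * (A1^2 - 2 * A2) + 2 * r * s * A2, - (r * x * A1):]" and
    "L = [:s^2 * A2, - (x * s * A1), x^2:]"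
  have "coeff (E_quad A1 A2 x r s) i = \<phi> * coeff g i" for i
    using E by simp
  from this[of 0] this[of 1] this[of 2] have dvd: "\<phi> dvd N" "\<phi> dvd M" "\<phi> dvd L"
    by (simp_all add: E_quad_coeffs N_def M_def L_def numeral_2_eq_2)
  have "x \<noteq> 0"
    using x by auto
  then have L: "L \<noteq> 0" "degree L = 2" "lead_coeff L = x^2"
    by (simp_all add: L_def numeral_2_eq_2)
  have "x^2 dvd 1"
    using mult_dvd_mono[OF x x] by (simp add: power2_eq_square)
  then have lead_unit: "lead_coeff \<phi> dvd 1"
    using is_unit_lead_coeff_if_dvd[OF dvd(3)] L(3) by simp
  have "degree \<phi> \<le> 2"
    using dvd_imp_degree_le[OF dvd(3) L(1)] L(2) by simp
  then consider "degree \<phi> = 0" | "degree \<phi> = 1" | "degree \<phi> = 2"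
    by linarith
  then show ?thesis
  proof cases
    case 1
    then show ?thesis
      using lead_unit by (metis degree_0_id is_unit_const_poly_iff)
  next
    case 2
    then obtain \<psi> where "poly \<phi> \<psi> = 0"
      using degree_one_has_root lead_unit by blast
    with dvd(1) have "poly N \<psi> = 0"
      by (auto elim!: dvdE)
    with E_quad_coeff0_no_root[OF A2 nonsquare] show ?thesis
      unfolding N_def by blast
  next
    case 3
    obtain c2 where "L = smult c2 \<phi>"
      using smult_if_dvd_degree_le[OF dvd(3)] L(2) 3 by auto
    moreover have "degree M \<le> 2"
      unfolding M_def by (rule degree_pCons3_le)
    then obtain c1 where "M = smult c1 \<phi>"
      using smult_if_dvd_degree_le[OF dvd(2)] 3 by auto
    ultimately have "coeff L 2 * coeff M 1 = coeff L 1 * coeff M 2"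
      by (simp add: ac_simps)
    with E_quad_coeffs_not_proportional[OF \<open>x \<noteq> 0\<close> rs A1] show ?thesis
      by (simp add: L_def M_def numeral_2_eq_2)
  qed
qed

lemma E_quad_no_linear_factors:
  fixes A1 A2 x r s :: "'a::{factorial_ring_gcd, semiring_gcd_mult_normalize}"
  assumes x: "x \<noteq> 0" and A2: "A2 \<noteq> 0"
    and nonsquare: "\<And>h. h^2 \<noteq> A1^2 - 4 * A2"
    and not_all_zero: "r \<noteq> 0 \<or> s \<noteq> 0 \<or> A1 \<noteq> 0"
  shows "E_quad A1 A2 x r s \<noteq> [:f0, f1:] * [:g0, g1:]"
proof
  let ?E = "E_quad A1 A2 x r s"
  assume "?E = [:f0, f1:] * [:g0, g1:]"
  moreover have "?E = [:coeff ?E 0, coeff ?E 1, coeff ?E 2:]"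
    by (simp add: E_quad_coeffs numeral_2_eq_2)
  ultimately have
    "(f0 * g1 - f1 * g0)^2 = [:A1^2 - 4 * A2:] * [:- (s * A2), x * A1, - (r * x):] ^ 2"
    using discriminant_of_linear_product E_quad_discriminant by metis
  moreover have "[:- (s * A2), x * A1, - (r * x):] \<noteq> 0"
    using not_all_zero A2 x by auto
  ultimately obtain h where "h^2 = [:A1^2 - 4 * A2:]"
    using square_if_mult_square_eq_square by blast
  then have "(poly h 0)^2 = A1^2 - 4 * A2"
    by (metis poly_power poly_0_coeff_0 coeff_pCons_0)
  with nonsquare show False
    by blast
qed

lemma irreducible_E_quad:
  fixes A1 A2 x r s :: "'a::{factorial_ring_gcd, semiring_gcd_mult_normalize}"
  assumes x: "x dvd 1" and A2: "A2 \<noteq> 0"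
    and nonsquare: "\<And>h. h^2 \<noteq> A1^2 - 4 * A2"
    and A1: "A1^2 \<noteq> 2 * A2" and rs: "r * s \<noteq> x"
    and not_all_zero: "r \<noteq> 0 \<or> s \<noteq> 0 \<or> A1 \<noteq> 0"
  shows "irreducible (E_quad A1 A2 x r s)"
proof (rule irreducibleI)
  let ?E = "E_quad A1 A2 x r s"
  have "x \<noteq> 0"
    using x by auto
  then have deg: "degree ?E = 2"
    by (simp add: E_quad_coeffs)
  then show "?E \<noteq> 0" "\<not> ?E dvd 1"
    by (auto simp: is_unit_poly_iff)
  have constant_factor: "f dvd 1" if fg: "?E = f * g" and f: "degree f = 0" for f g
  proof -
    obtain \<phi> where "f = [:\<phi>:]"
      using degree0_coeffs[OF f] by blast
    with fg have "\<phi> dvd 1"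
      by (intro E_quad_content_is_unit[OF x A2 nonsquare A1 rs]) simp
    with \<open>f = [:\<phi>:]\<close> show ?thesis
      by (simp add: is_unit_const_poly_iff)
  qed
  fix f g
  assume fg: "?E = f * g"
  then have "degree f + degree g = 2"
    using deg by (metis degree_mult_eq mult_eq_0_iff zero_neq_numeral degree_0)
  then consider "degree f = 0" | "degree g = 0" | "degree f = 1" "degree g = 1"
    by linarith
  then show "f dvd 1 \<or> g dvd 1"
  proof cases
    case 3
    then obtain f0 f1 g0 g1 where "f = [:f0, f1:]" "g = [:g0, g1:]"
      using degree1_coeffs by metis
    with fg E_quad_no_linear_factors[OF \<open>x \<noteq> 0\<close> A2 nonsquare not_all_zero]
    show ?thesis
      by blast
  qed (use fg constant_factor[of f g] constant_factor[of g f] in \<open>simp_all add: mult.commute\<close>)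
qed

section \<open>The polynomial E*\<close>

text \<open>Elements of C[a,b] are complex poly poly with outer variable b:
  A1_of p q = p a + q b and A2_of x = x a b.\<close>

definition A1_of :: "complex \<Rightarrow> complex \<Rightarrow> complex poly poly" where
  "A1_of p q = [:[:0, p:], [:q:]:]"

definition A2_of :: "complex \<Rightarrow> complex poly poly" where
  "A2_of x = [:0, [:0, x:]:]"

lemma poly_one_A1_of_A2_of:
  "poly (A1_of p q) 1 = [:q, p:]" "poly (A2_of x) 1 = [:0, x:]"
  by (simp_all add: A1_of_def A2_of_def)

text \<open>Setting b = 1 turns A1^2 - 4 A2 into a quadratic in a, which is a square only if its
  discriminant 16 x (x - p q) vanishes.\<close>

lemma A1_of_A2_of_discriminant_not_square:
  assumes "x \<noteq> 0" "p * q \<noteq> x"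
  shows "h^2 \<noteq> A1_of p q ^ 2 - 4 * A2_of x"
proof
  assume "h^2 = A1_of p q ^ 2 - 4 * A2_of x"
  then have "poly (h^2) 1 = poly (A1_of p q ^ 2 - 4 * A2_of x) 1"
    by simp
  then have "(poly h 1)^2 = [:q, p:]^2 - 4 * [:0, x:]"
    by (simp add: poly_one_A1_of_A2_of)
  also have "\<dots> = [:q^2, 2 * p * q - 4 * x, p^2:]"
    by (simp add: power2_eq_square algebra_simps numeral_poly)
  finally have "(2 * p * q - 4 * x)^2 = 4 * q^2 * p^2"
    by (rule square_of_binary_quadratic_form)
  then have "16 * x * (x - p * q) = 0"
    by (simp add: power2_eq_square algebra_simps)
  with assms show False
    by simp
qed

lemma A1_of_square_ne_2_A2_of:
  assumes "x \<noteq> 0"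
  shows "A1_of p q ^ 2 \<noteq> 2 * A2_of x"
proof
  assume "A1_of p q ^ 2 = 2 * A2_of x"
  then have "poly (A1_of p q ^ 2) 1 = poly (2 * A2_of x) 1"
    by simp
  then have "[:q, p:]^2 - 2 * [:0, x:] = 0"
    by (simp add: poly_one_A1_of_A2_of)
  moreover have "[:q, p:]^2 - 2 * [:0, x:] = [:q^2, 2 * p * q - 2 * x, p^2:]"
    by (simp add: power2_eq_square algebra_simps numeral_poly)
  ultimately show False
    using assms by simp
qed

lemma E_star_eq_E_quad:
  "E_star x y z =
     E_quad (A1_of ((y - x) / (y - 1)) ((x * y - 1) / (y - 1))) (A2_of x)
       [:[:x:]:] [:[:(z - x) / (z - 1):]:] [:[:(x * z - 1) / (z - 1):]:]"
proof -
  have "[:[:A1_of p q:]:] = const4 p * var_a + const4 q * var_b"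
    "[:[:A2_of x:]:] = const4 x * var_a * var_b"
    "[:[:0, [:[:r:]:]:], [:[:[:s:]:]:]:] = const4 r * var_c + const4 s * var_d"
    "[:0, [:0, [:[:x:]:]:]:] = const4 x * var_c * var_d" for p q r s
    by (simp_all add: A1_of_def A2_of_def const4_def var_a_def var_b_def var_c_def var_d_def)
  then show ?thesis
    by (simp add: E_star_def E_quad_def E_poly_eq_E_form)
qed

lemma is_unit_mpoly4_iff: "f dvd 1 \<longleftrightarrow> (\<exists>c. c \<noteq> 0 \<and> f = const4 c)"
  by (auto simp: is_unit_poly_iff const4_def dvd_field_iff)

lemma unit_Qbar4_iff_is_unit:
  assumes "alg_coeffs4 f"
  shows "unit_Qbar4 f \<longleftrightarrow> f dvd 1"
proof
  show "unit_Qbar4 f \<Longrightarrow> f dvd 1"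
    unfolding unit_Qbar4_def by (metis dvdI)
next
  assume "f dvd 1"
  then obtain c where "c \<noteq> 0" "f = const4 c"
    by (auto simp: is_unit_mpoly4_iff)
  moreover have "algebraic c"
    using assms \<open>f = const4 c\<close> unfolding alg_coeffs4_def
    by (metis const4_def coeff_pCons_0)
  ultimately have "alg_coeffs4 (const4 (inverse c))" "f * const4 (inverse c) = 1"
    by (auto simp: alg_coeffs4_def const4_def coeff_pCons one_pCons split: nat.split)
  then show "unit_Qbar4 f"
    unfolding unit_Qbar4_def by blast
qed

lemma irreducible_Qbar4_if_irreducible:
  assumes "alg_coeffs4 p" "irreducible p"
  shows "irreducible_Qbar4 p"
  using assms unfolding irreducible_Qbar4_def irreducible_def
  by (auto simp: unit_Qbar4_iff_is_unit)

lemma linear_coeffs_product_ne: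
  fixes x y :: complex
  assumes "x \<noteq> 1" "y \<noteq> 1" "y \<noteq> 0"
  shows "(y - x) / (y - 1) * ((x * y - 1) / (y - 1)) \<noteq> x"
proof
  assume "(y - x) / (y - 1) * ((x * y - 1) / (y - 1)) = x"
  then have "(y - x) * (x * y - 1) / (y - 1)^2 = x"
    by (simp add: power2_eq_square)
  then have "(y - x) * (x * y - 1) = x * (y - 1)^2"
    using assms(2) by (simp add: divide_eq_eq del: power2_eq_square)
  moreover have "y * (x - 1)^2 = x * (y - 1)^2 - (y - x) * (x * y - 1)"
    by (simp add: algebra_simps power2_eq_square)
  ultimately have "y * (x - 1)^2 = 0"
    by simp
  with assms show False
    by simp
qed

lemma A1_B1_coeffs_vanish_imp_minus_one:
  fixes x y z :: complex
  assumes "y \<noteq> 1" "z \<noteq> 1" "x \<noteq> 1"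
    and "(y - x) / (y - 1) = 0" "(x * y - 1) / (y - 1) = 0" "(z - x) / (z - 1) = 0"
  shows "x = -1 \<and> y = -1 \<and> z = -1"
proof -
  have "y = x" "x * y = 1" "z = x"
    using assms by auto
  then have "(x - 1) * (x + 1) = 0"
    by (simp add: algebra_simps)
  with assms(3) \<open>y = x\<close> \<open>z = x\<close> show ?thesis
    by (simp add: add_eq_0_iff2)
qed

lemma irreducible_E_quad_A1_of_A2_of:
  assumes "x \<noteq> 0" "p * q \<noteq> x" "r * s \<noteq> x" "p \<noteq> 0 \<or> q \<noteq> 0 \<or> r \<noteq> 0"
  shows "irreducible (E_quad (A1_of p q) (A2_of x) [:[:x:]:] [:[:r:]:] [:[:s:]:])"
proof (rule irreducible_E_quad)
  show "[:[:x:]:] dvd 1" "A2_of x \<noteq> 0"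
    using assms(1) by (simp_all add: is_unit_const_poly_iff dvd_field_iff A2_of_def)
  show "h^2 \<noteq> A1_of p q ^ 2 - 4 * A2_of x" for h
    using assms(1,2) by (rule A1_of_A2_of_discriminant_not_square)
  show "A1_of p q ^ 2 \<noteq> 2 * A2_of x"
    using assms(1) by (rule A1_of_square_ne_2_A2_of)
  show "[:[:r:]:] * [:[:s:]:] \<noteq> [:[:x:]:]"
    using assms(3) by simp
  show "[:[:r:]:] \<noteq> 0 \<or> [:[:s:]:] \<noteq> 0 \<or> A1_of p q \<noteq> 0"
    using assms(4) by (auto simp: A1_of_def)
qed

lemma root_of_unity_nonzero: "root_of_unity x \<Longrightarrow> x \<noteq> 0"
  unfolding root_of_unity_def by (auto simp: zero_power)

theorem theoremA2:
  fixes x y z :: complex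
  assumes "root_of_unity x" and "root_of_unity y" and "root_of_unity z"
    and "x \<noteq> 1" and "y \<noteq> 1" and "z \<noteq> 1"
    and "\<not> (x = -1 \<and> y = -1 \<and> z = -1)"
  shows "irreducible_Qbar4 (E_star x y z)"
proof -
  define p q r s where "p = (y - x) / (y - 1)" and "q = (x * y - 1) / (y - 1)"
    and "r = (z - x) / (z - 1)" and "s = (x * z - 1) / (z - 1)"
  have "x \<noteq> 0" "y \<noteq> 0" "z \<noteq> 0"
    using assms(1-3) by (simp_all add: root_of_unity_nonzero)
  moreover have "p * q \<noteq> x" "r * s \<noteq> x"
    using linear_coeffs_product_ne[of x y] linear_coeffs_product_ne[of x z] assms(4-6)
      \<open>y \<noteq> 0\<close> \<open>z \<noteq> 0\<close>
    unfolding p_def q_def r_def s_def by blast+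
  moreover have "p \<noteq> 0 \<or> q \<noteq> 0 \<or> r \<noteq> 0"
    using A1_B1_coeffs_vanish_imp_minus_one[of y z x] assms(4-7) unfolding p_def q_def r_def
    by blast
  ultimately have "irreducible (E_quad (A1_of p q) (A2_of x) [:[:x:]:] [:[:r:]:] [:[:s:]:])"
    by (intro irreducible_E_quad_A1_of_A2_of)
  moreover have "E_star x y z = E_quad (A1_of p q) (A2_of x) [:[:x:]:] [:[:r:]:] [:[:s:]:]"
    unfolding p_def q_def r_def s_def by (rule E_star_eq_E_quad)
  ultimately show ?thesis
    using alg_coeffs4_E_star[OF assms(1-3,5,6)] by (simp add: irreducible_Qbar4_if_irreducible)
qed

end
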